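(* In the setting of the context, let $p>L$ and $\alpha>0$, and set $\sigma_2=\frac{2(p+L)}{p-L}$. For every $y\in Y$ and $z\in\mathbb{R}^n$, $$\alpha(p-L)\|x^*(z)-x(y_+(z),z)\|^2\le(1+\alpha L+\alpha L\sigma_2)\|y-y_+(z)\|\cdot\mathrm{dist}(y_+(z),Y(z))\le(1+\alpha L+\alpha L\sigma_2)\|y-y_+(z)\|\cdot D(Y),$$ where $D(Y)$ is the diameter of $Y$.
   Context: $X\subseteq\mathbb{R}^n$ nonempty closed convex, $Y\subseteq\mathbb{R}^m$ nonempty closed convex compact, $f$ continuously differentiable with $f(x,\cdot)$ concave for each $x$, $\nabla_xf$ and $\nabla_yf$ $L$-Lipschitz, $\max_{y\in Y}f(x,y)$ bounded below. $P_Y$ is Euclidean projection and $\mathrm{dist}$ Euclidean distance to a set. $K(x,z;y)=f(x,y)+\frac p2\|x-z\|^2$; $x(y,z)=\arg\min_{x\in X}K(x,z;y)$; $d(y,z)=\min_{x\in X}K(x,z;y)$; $Y(z)=\arg\max_{y\in Y}d(y,z)$; $x^*(z)=\arg\min_{x\in X}\max_{y\in Y}K(x,z;y)$; $y_+(z)=P_Y\big(y+\alpha\nabla_yK(x(y,z),z;y)\big)$ (depending on $y$). *)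

theory Defs
  imports "HOL-Analysis.Analysis"
begin

definition Kfun :: "('a::euclidean_space \<Rightarrow> 'b::euclidean_space \<Rightarrow> real) \<Rightarrow> real \<Rightarrow> 'a \<Rightarrow> 'a \<Rightarrow> 'b \<Rightarrow> real" where
  "Kfun f p x z y = f x y + p / 2 * (norm (x - z))\<^sup>2"

definition xmin :: "('a::euclidean_space \<Rightarrow> 'b::euclidean_space \<Rightarrow> real) \<Rightarrow> real \<Rightarrow> 'a set \<Rightarrow> 'b \<Rightarrow> 'a \<Rightarrow> 'a" where
  "xmin f p X y z = (SOME x. x \<in> X \<and> (\<forall>x'\<in>X. Kfun f p x z y \<le> Kfun f p x' z y))"

definition dfun :: "('a::euclidean_space \<Rightarrow> 'b::euclidean_space \<Rightarrow> real) \<Rightarrow> real \<Rightarrow> 'a set \<Rightarrow> 'b \<Rightarrow> 'a \<Rightarrow> real" where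
  "dfun f p X y z = (INF x\<in>X. Kfun f p x z y)"

definition Yset :: "('a::euclidean_space \<Rightarrow> 'b::euclidean_space \<Rightarrow> real) \<Rightarrow> real \<Rightarrow> 'a set \<Rightarrow> 'b set \<Rightarrow> 'a \<Rightarrow> 'b set" where
  "Yset f p X Y z = {y \<in> Y. \<forall>y'\<in>Y. dfun f p X y' z \<le> dfun f p X y z}"

definition xstar :: "('a::euclidean_space \<Rightarrow> 'b::euclidean_space \<Rightarrow> real) \<Rightarrow> real \<Rightarrow> 'a set \<Rightarrow> 'b set \<Rightarrow> 'a \<Rightarrow> 'a" where
  "xstar f p X Y z = (SOME x. x \<in> X \<and>
      (\<forall>x'\<in>X. (SUP y\<in>Y. Kfun f p x z y) \<le> (SUP y\<in>Y. Kfun f p x' z y)))"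

text \<open>y_+(z) = P_Y(y + alpha * grad_y K(x(y,z),z;y)); note grad_y K = grad_y f,
  where gy is the partial gradient of f with respect to y.\<close>
definition yplus :: "('a::euclidean_space \<Rightarrow> 'b::euclidean_space \<Rightarrow> real) \<Rightarrow> ('a \<Rightarrow> 'b \<Rightarrow> 'b) \<Rightarrow> real \<Rightarrow> real \<Rightarrow> 'a set \<Rightarrow> 'b set \<Rightarrow> 'b \<Rightarrow> 'a \<Rightarrow> 'b" where
  "yplus f gy p \<alpha> X Y y z = closest_point Y (y + \<alpha> *\<^sub>R gy (xmin f p X y z) y)"

end

(*
  Because p > L, the proximal function K(.,z;y) is (p - L)-strongly convex. Hence x(y,z)
  exists, is characterised by a variational inequality, K grows quadratically away from it,
  and y |-> x(y,z) is L/(p - L)-Lipschitz. A maximiser w of d(.,z) over Y satisfies the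
  first-order condition of the concave problem at x(w,z), so (x(w,z), w) is a saddle point
  and x^*(z) = x(w,z). Adding the quadratic-growth inequalities at w and at y_+ and using
  concavity of f in y gives
    (p - L) |x(w,z) - x(y_+,z)|^2 <= grad_y f(x(y_+,z), y_+) . (w - y_+),
  and the projection inequality defining y_+ together with the Lipschitz bounds estimates the
  right-hand side by (1/alpha + L p/(p - L)) |y - y_+| |w - y_+|. Taking the infimum over
  w in Y(z) yields the distance bound, and L p/(p - L) <= L + L sigma_2.
*)

theory Submission
  imports Defs
begin

lemma derivative_ge_of_right_increments:
  fixes \<phi> :: "real \<Rightarrow> real"
  assumes "(\<phi> has_real_derivative D) (at 0)"
    and "\<And>t. 0 < t \<Longrightarrow> t \<le> 1 \<Longrightarrow> c * t \<le> \<phi> t - \<phi> 0"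
  shows "c \<le> D"
proof -
  have "((\<lambda>t. (\<phi> t - \<phi> 0) / t) \<longlongrightarrow> D) (at_right 0)"
    using assms(1) unfolding has_field_derivative_iff by (auto intro: tendsto_mono at_le)
  moreover have "\<forall>\<^sub>F t in at_right 0. c \<le> (\<phi> t - \<phi> 0) / t"
    using eventually_at_right_real[OF zero_less_one]
    by eventually_elim (use assms(2) in \<open>auto simp: pos_le_divide_eq\<close>)
  ultimately show ?thesis by (simp add: tendsto_lowerbound)
qed

lemma has_real_derivative_along_line:
  fixes F :: "'c::real_inner \<Rightarrow> real"
  assumes "(F has_derivative (\<lambda>h. G \<bullet> h)) (at (u + t *\<^sub>R d))"
  shows "((\<lambda>s. F (u + s *\<^sub>R d)) has_real_derivative G \<bullet> d) (at t)"
proof -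
  have "((\<lambda>s. u + s *\<^sub>R d) has_derivative (\<lambda>s. s *\<^sub>R d)) (at t)"
    by (auto intro!: derivative_eq_intros)
  from has_derivative_compose[OF this assms] show ?thesis
    unfolding has_field_derivative_def by (rule has_derivative_eq_rhs) (simp add: fun_eq_iff)
qed

lemma Lipschitz_gradient_lower_bound:
  fixes F :: "'c::real_inner \<Rightarrow> real"
  assumes deriv: "\<And>w. (F has_derivative (\<lambda>h. G w \<bullet> h)) (at w)"
    and Lip: "\<And>w w'. norm (G w - G w') \<le> M * norm (w - w')"
  shows "F u + G u \<bullet> (v - u) - M / 2 * (norm (v - u))\<^sup>2 \<le> F v"
proof -
  define d where "d = v - u"
  define h where "h t = F (u + t *\<^sub>R d) - t * (G u \<bullet> d) + M / 2 * t\<^sup>2 * (norm d)\<^sup>2" for t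
  have h_deriv: "(h has_real_derivative (G (u + t *\<^sub>R d) - G u) \<bullet> d + M * t * (norm d)\<^sup>2) (at t)" for t
    unfolding h_def
    by (rule derivative_eq_intros has_real_derivative_along_line[OF deriv] | simp add: inner_diff_left)+
  have h_deriv_nonneg: "0 \<le> (G (u + t *\<^sub>R d) - G u) \<bullet> d + M * t * (norm d)\<^sup>2" if "0 \<le> t" for t
  proof -
    have "- ((G (u + t *\<^sub>R d) - G u) \<bullet> d) \<le> norm (G (u + t *\<^sub>R d) - G u) * norm d"
      using Cauchy_Schwarz_ineq2 abs_le_iff by metis
    also have "\<dots> \<le> M * norm (t *\<^sub>R d) * norm d"
      using Lip[of "u + t *\<^sub>R d" u] by (simp add: mult_right_mono)
    also have "\<dots> = M * t * (norm d)\<^sup>2"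
      using that by (simp add: power2_eq_square)
    finally show ?thesis by linarith
  qed
  have "h 0 \<le> h 1"
    by (rule DERIV_nonneg_imp_nondecreasing[of 0 1]) (use h_deriv h_deriv_nonneg in auto)
  then show ?thesis by (simp add: h_def d_def)
qed

lemma concave_on_le_tangent:
  fixes F :: "'c::real_inner \<Rightarrow> real"
  assumes "concave_on UNIV F" and "(F has_derivative (\<lambda>h. G \<bullet> h)) (at u)"
  shows "F v \<le> F u + G \<bullet> (v - u)"
proof -
  have "F v - F u \<le> G \<bullet> (v - u)"
  proof (rule derivative_ge_of_right_increments)
    show "((\<lambda>t. F (u + t *\<^sub>R (v - u))) has_real_derivative G \<bullet> (v - u)) (at 0)"
      using assms(2) by (intro has_real_derivative_along_line) simp
    fix t :: real assume "0 < t" "t \<le> 1"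
    then have "(1 - t) * F u + t * F v \<le> F ((1 - t) *\<^sub>R u + t *\<^sub>R v)"
      using concave_onD[OF assms(1)] by simp
    then show "(F v - F u) * t \<le> F (u + t *\<^sub>R (v - u)) - F (u + 0 *\<^sub>R (v - u))"
      by (simp add: algebra_simps)
  qed
  then show ?thesis by simp
qed

lemma minimum_on_convex_imp_inner_nonneg:
  fixes F :: "'c::real_inner \<Rightarrow> real"
  assumes "(F has_derivative (\<lambda>h. G \<bullet> h)) (at u)"
    and "convex S" "u \<in> S" "v \<in> S" "\<And>w. w \<in> S \<Longrightarrow> F u \<le> F w"
  shows "0 \<le> G \<bullet> (v - u)"
proof (rule derivative_ge_of_right_increments)
  show "((\<lambda>t. F (u + t *\<^sub>R (v - u))) has_real_derivative G \<bullet> (v - u)) (at 0)"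
    using assms(1) by (intro has_real_derivative_along_line) simp
  fix t :: real assume "0 < t" "t \<le> 1"
  then have "(1 - t) *\<^sub>R u + t *\<^sub>R v \<in> S"
    using assms(2-4) by (intro convexD) auto
  then show "0 * t \<le> F (u + t *\<^sub>R (v - u)) - F (u + 0 *\<^sub>R (v - u))"
    using assms(5) by (simp add: algebra_simps)
qed

lemma continuous_attains_inf_quadratic_growth:
  fixes F :: "'c::euclidean_space \<Rightarrow> real"
  assumes "closed S" "x0 \<in> S" "continuous_on S F" "0 < m"
    and growth: "\<And>x. x \<in> S \<Longrightarrow> F x0 + G \<bullet> (x - x0) + m / 2 * (norm (x - x0))\<^sup>2 \<le> F x"
  shows "\<exists>x\<in>S. \<forall>w\<in>S. F x \<le> F w"
proof -
  \<comment> \<open>Outside this ball the growth bound already exceeds F x0.\<close>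
  define T where "T = S \<inter> cball x0 (2 * norm G / m)"
  have "compact T" "x0 \<in> T" "continuous_on T F"
    using assms(1-4) by (auto simp: T_def compact_Int_closed continuous_on_subset)
  then obtain x where x: "x \<in> T" "\<And>w. w \<in> T \<Longrightarrow> F x \<le> F w"
    using continuous_attains_inf[of T F] by blast
  have "F x \<le> F w" if "w \<in> S" for w
  proof (cases "w \<in> T")
    case False
    with that have "2 * norm G / m < norm (w - x0)"
      by (simp add: T_def dist_norm norm_minus_commute)
    then have "2 * norm G < norm (w - x0) * m" and "0 < norm (w - x0)"
      using \<open>0 < m\<close> norm_ge_zero[of G] by (auto simp: pos_divide_less_eq)
    then have "2 * norm G * norm (w - x0) < norm (w - x0) * m * norm (w - x0)"
      by (intro mult_strict_right_mono)
    then have "norm G * norm (w - x0) < m / 2 * (norm (w - x0))\<^sup>2"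
      by (simp add: power2_eq_square algebra_simps)
    moreover have "- (G \<bullet> (w - x0)) \<le> norm G * norm (w - x0)"
      using Cauchy_Schwarz_ineq2 abs_le_iff by metis
    ultimately have "F x0 < F w" using growth[OF that] by linarith
    with x(2)[OF \<open>x0 \<in> T\<close>] show ?thesis by simp
  qed (use x in auto)
  with x(1) show ?thesis by (auto simp: T_def)
qed

lemma le_mult_infdist:
  assumes "A \<noteq> {}" "0 \<le> c" "\<And>a. a \<in> A \<Longrightarrow> b \<le> c * dist x a"
  shows "b \<le> c * infdist x A"
proof (cases "c = 0")
  case True
  with assms(1,3) show ?thesis by auto
next
  case False
  with assms(2) have "0 < c" by simp
  have "b / c \<le> infdist x A"
    unfolding infdist_notempty[OF assms(1)]
    by (rule cINF_greatest[OF assms(1)]) (use assms(3) \<open>0 < c\<close> in \<open>simp add: divide_le_eq mult.commute\<close>)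
  with \<open>0 < c\<close> show ?thesis by (simp add: divide_le_eq mult.commute)
qed

lemma norm_Pair_diff_le: "norm ((x, y) - (x', y')) \<le> norm (x - x') + norm (y - y')"
  using norm_Pair_le[of "x - x'" "y - y'"] by simp

locale proximal_minimax =
  fixes f :: "'a::euclidean_space \<Rightarrow> 'b::euclidean_space \<Rightarrow> real"
    and gx :: "'a \<Rightarrow> 'b \<Rightarrow> 'a" and gy :: "'a \<Rightarrow> 'b \<Rightarrow> 'b"
    and X :: "'a set" and Y :: "'b set"
    and L p :: real and z :: 'a
  assumes X: "X \<noteq> {}" "closed X" "convex X"
    and Y: "Y \<noteq> {}" "compact Y" "convex Y"
    and grad: "\<And>x y. ((\<lambda>(u, v). f u v) has_derivative
                 (\<lambda>(du, dv). gx x y \<bullet> du + gy x y \<bullet> dv)) (at (x, y))"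
    and cont_gy: "continuous_on UNIV (\<lambda>(x, y). gy x y)"
    and concave: "\<And>x. concave_on UNIV (f x)"
    and Lip_x: "\<And>x y x' y'. norm (gx x y - gx x' y') \<le> L * norm ((x, y) - (x', y'))"
    and Lip_y: "\<And>x y x' y'. norm (gy x y - gy x' y') \<le> L * norm ((x, y) - (x', y'))"
    and pL: "L < p"
begin

abbreviation K :: "'a \<Rightarrow> 'b \<Rightarrow> real" where "K x y \<equiv> Kfun f p x z y"
abbreviation xm :: "'b \<Rightarrow> 'a" where "xm y \<equiv> xmin f p X y z"
abbreviation Kgrad :: "'a \<Rightarrow> 'b \<Rightarrow> 'a" where "Kgrad x y \<equiv> gx x y + p *\<^sub>R (x - z)"

lemma L_nonneg: "0 \<le> L"
proof -
  obtain b :: 'a where b: "b \<in> Basis" using nonempty_Basis by blast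
  have "norm (gx b 0 - gx 0 0) \<le> L * norm ((b, 0::'b) - (0, 0))" by (rule Lip_x)
  moreover have "norm ((b, 0::'b) - (0, 0)) = 1" using b by (simp add: norm_Pair)
  ultimately show ?thesis by (metis mult.right_neutral norm_ge_zero order_trans)
qed

lemma gx_Lipschitz: "norm (gx x y - gx x' y') \<le> L * (norm (x - x') + norm (y - y'))"
  using Lip_x[of x y x' y'] norm_Pair_diff_le[of x y x' y'] L_nonneg
  by (meson mult_left_mono order_trans)

lemma gy_Lipschitz: "norm (gy x y - gy x' y') \<le> L * (norm (x - x') + norm (y - y'))"
  using Lip_y[of x y x' y'] norm_Pair_diff_le[of x y x' y'] L_nonneg
  by (meson mult_left_mono order_trans)

lemma f_has_derivative_fst: "((\<lambda>x. f x y) has_derivative (\<lambda>h. gx x y \<bullet> h)) (at x)"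
  using has_derivative_compose[of "\<lambda>x. (x, y)" "\<lambda>h. (h, 0)", OF _ grad] by (simp add: has_derivative_Pair)

lemma f_has_derivative_snd: "((\<lambda>y. f x y) has_derivative (\<lambda>h. gy x y \<bullet> h)) (at y)"
  using has_derivative_compose[of "\<lambda>y. (x, y)" "\<lambda>h. (0, h)", OF _ grad] by (simp add: has_derivative_Pair)

lemma K_has_derivative: "((\<lambda>x. K x y) has_derivative (\<lambda>h. Kgrad x y \<bullet> h)) (at x)"
  unfolding Kfun_def power2_norm_eq_inner
  by (auto intro!: derivative_eq_intros f_has_derivative_fst
      simp: fun_eq_iff inner_add_left inner_commute algebra_simps)

lemma K_strongly_convex:
  "K x y + Kgrad x y \<bullet> (x' - x) + (p - L) / 2 * (norm (x' - x))\<^sup>2 \<le> K x' y"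
proof -
  have descent: "f x y + gx x y \<bullet> (x' - x) - L / 2 * (norm (x' - x))\<^sup>2 \<le> f x' y"
    using gx_Lipschitz[of _ y _ y]
    by (intro Lipschitz_gradient_lower_bound[OF f_has_derivative_fst]) simp
  have "(norm (x' - z))\<^sup>2 = (norm (x - z))\<^sup>2 + 2 * ((x - z) \<bullet> (x' - x)) + (norm (x' - x))\<^sup>2"
    by (simp add: power2_norm_eq_inner inner_diff_left inner_diff_right inner_commute)
  then have "p / 2 * (norm (x' - z))\<^sup>2
      = p / 2 * ((norm (x - z))\<^sup>2 + 2 * ((x - z) \<bullet> (x' - x)) + (norm (x' - x))\<^sup>2)"
    by (rule arg_cong)
  also have "\<dots> = p / 2 * (norm (x - z))\<^sup>2 + (p *\<^sub>R (x - z)) \<bullet> (x' - x) + p / 2 * (norm (x' - x))\<^sup>2"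
    by (simp add: algebra_simps)
  finally have proximal: "p / 2 * (norm (x' - z))\<^sup>2
      = p / 2 * (norm (x - z))\<^sup>2 + (p *\<^sub>R (x - z)) \<bullet> (x' - x) + p / 2 * (norm (x' - x))\<^sup>2" .
  have "(p - L) / 2 * (norm (x' - x))\<^sup>2 = p / 2 * (norm (x' - x))\<^sup>2 - L / 2 * (norm (x' - x))\<^sup>2"
    by (simp add: field_simps)
  with descent proximal show ?thesis
    unfolding Kfun_def inner_add_left by linarith
qed

lemma K_continuous: "continuous_on S (\<lambda>x. K x y)"
  using K_has_derivative by (intro has_derivative_continuous_on) (auto intro: has_derivative_at_withinI)

lemma xmin_exists: "\<exists>x. x \<in> X \<and> (\<forall>w\<in>X. K x y \<le> K w y)"
proof -
  obtain x0 where "x0 \<in> X" using X(1) by blast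
  have "\<exists>x\<in>X. \<forall>w\<in>X. K x y \<le> K w y"
    using pL K_strongly_convex[of x0 y]
    by (intro continuous_attains_inf_quadratic_growth[OF X(2) \<open>x0 \<in> X\<close> K_continuous]) auto
  then show ?thesis by blast
qed

lemma xmin_in: "xm y \<in> X"
  and xmin_le: "x \<in> X \<Longrightarrow> K (xm y) y \<le> K x y"
  using someI_ex[OF xmin_exists] unfolding xmin_def by blast+

lemma xmin_variational: "x \<in> X \<Longrightarrow> 0 \<le> Kgrad (xm y) y \<bullet> (x - xm y)"
  using xmin_le by (intro minimum_on_convex_imp_inner_nonneg[OF K_has_derivative X(3) xmin_in])

lemma K_quadratic_growth: "x \<in> X \<Longrightarrow> K (xm y) y + (p - L) / 2 * (norm (x - xm y))\<^sup>2 \<le> K x y"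
  using K_strongly_convex[of "xm y" y x] xmin_variational[of x y] by linarith

lemma xmin_Lipschitz: "norm (xm y - xm y') \<le> L / (p - L) * norm (y - y')"
proof -
  define D where "D = xm y - xm y'"
  have Kgrad_diff: "Kgrad (xm y') y' - Kgrad (xm y) y = (gx (xm y') y' - gx (xm y) y) - p *\<^sub>R D"
    by (simp add: D_def algebra_simps)
  have "0 \<le> Kgrad (xm y') y' \<bullet> D"
    using xmin_variational[OF xmin_in, of y' y] by (simp add: D_def)
  moreover have "0 \<le> - (Kgrad (xm y) y \<bullet> D)"
    using xmin_variational[OF xmin_in, of y y'] by (simp add: D_def inner_diff_right)
  moreover have "(Kgrad (xm y') y' - Kgrad (xm y) y) \<bullet> D = (gx (xm y') y' - gx (xm y) y) \<bullet> D - p * (norm D)\<^sup>2"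
    unfolding Kgrad_diff by (simp only: inner_diff_left inner_scaleR_left power2_norm_eq_inner)
  ultimately have "p * (norm D)\<^sup>2 \<le> (gx (xm y') y' - gx (xm y) y) \<bullet> D"
    by (simp add: inner_diff_left)
  also have "\<dots> \<le> norm (gx (xm y') y' - gx (xm y) y) * norm D"
    using Cauchy_Schwarz_ineq2 abs_le_iff by metis
  also have "\<dots> \<le> L * (norm D + norm (y - y')) * norm D"
    using gx_Lipschitz[of "xm y'" y' "xm y" y]
    by (intro mult_right_mono) (simp_all add: D_def norm_minus_commute)
  finally have "(p - L) * norm D * norm D \<le> L * norm (y - y') * norm D"
    by (simp add: power2_eq_square algebra_simps)
  then have "(p - L) * norm D \<le> L * norm (y - y')"
    using pL L_nonneg by (cases "D = 0") (auto intro: mult_right_le_imp_le)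
  then show ?thesis
    using pL by (simp add: D_def pos_le_divide_eq mult.commute)
qed

lemma xmin_continuous: "continuous_on S xm"
proof (rule lipschitz_on_continuous_on)
  show "(L / (p - L))-lipschitz_on S xm"
    using xmin_Lipschitz L_nonneg pL by (intro lipschitz_onI) (auto simp: dist_norm)
qed

lemma gy_xmin_Lipschitz: "norm (gy (xm y) y - gy (xm y') y') \<le> L * p / (p - L) * norm (y - y')"
proof -
  have "norm (gy (xm y) y - gy (xm y') y') \<le> L * (L / (p - L) * norm (y - y') + norm (y - y'))"
    using gy_Lipschitz[of "xm y" y "xm y'" y'] xmin_Lipschitz[of y y'] L_nonneg
    by (meson add_right_mono mult_left_mono order_trans)
  also have "\<dots> = L * p / (p - L) * norm (y - y')"
    using pL by (simp add: field_simps)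
  finally show ?thesis .
qed

lemma dfun_eq: "dfun f p X y z = K (xm y) y"
  unfolding dfun_def using xmin_in xmin_le by (intro cInf_eq_minimum) auto

lemma Yset_nonempty: "Yset f p X Y z \<noteq> {}"
proof -
  have "continuous_on UNIV (\<lambda>(u, v). f u v)"
    by (intro continuous_at_imp_continuous_on ballI) (metis grad has_derivative_continuous prod.collapse)
  then have "continuous_on Y (\<lambda>y. (\<lambda>(u, v). f u v) (xm y, y))"
    by (rule continuous_on_compose2) (auto intro!: continuous_intros xmin_continuous)
  then have "continuous_on Y (\<lambda>y. K (xm y) y)"
    unfolding Kfun_def by (auto intro!: continuous_intros xmin_continuous)
  then obtain ys where "ys \<in> Y" "\<And>y. y \<in> Y \<Longrightarrow> K (xm y) y \<le> K (xm ys) ys"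
    using continuous_attains_sup[OF Y(2,1)] by blast
  then show ?thesis
    unfolding Yset_def dfun_eq by blast
qed

lemma f_le_tangent_snd: "f x y' \<le> f x y + gy x y \<bullet> (y' - y)"
  by (rule concave_on_le_tangent[OF concave f_has_derivative_snd])

lemma Yset_first_order:
  assumes ys: "ys \<in> Yset f p X Y z" and "y \<in> Y"
  shows "gy (xm ys) ys \<bullet> (y - ys) \<le> 0"
proof -
  define d where "d = y - ys"
  define g where "g t = gy (xm (ys + t *\<^sub>R d)) (ys + t *\<^sub>R d) \<bullet> d" for t
  have ysY: "ys \<in> Y" and ys_max: "\<And>w. w \<in> Y \<Longrightarrow> K (xm w) w \<le> K (xm ys) ys"
    using ys unfolding Yset_def dfun_eq by auto
  \<comment> \<open>d(.,z) does not increase from ys to ys + t d; concavity in y turns this into g t \<le> 0.\<close>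
  have g_nonpos: "g t \<le> 0" if "0 < t" "t \<le> 1" for t
  proof -
    define yt where "yt = ys + t *\<^sub>R d"
    have "yt = (1 - t) *\<^sub>R ys + t *\<^sub>R y"
      by (simp add: yt_def d_def algebra_simps)
    then have "yt \<in> Y"
      using Y(3) ysY \<open>y \<in> Y\<close> that by (simp add: convexD)
    then have "K (xm yt) yt \<le> K (xm yt) ys"
      using ys_max xmin_le[of "xm yt" ys] xmin_in by (meson order_trans)
    then have "f (xm yt) yt \<le> f (xm yt) ys"
      by (simp add: Kfun_def)
    moreover have "f (xm yt) ys \<le> f (xm yt) yt + gy (xm yt) yt \<bullet> (ys - yt)"
      by (rule f_le_tangent_snd)
    moreover have "ys - yt = - (t *\<^sub>R d)"
      by (simp add: yt_def)
    ultimately have "t * g t \<le> 0"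
      by (simp add: g_def yt_def)
    with \<open>0 < t\<close> show ?thesis
      by (simp add: mult_le_0_iff)
  qed
  have "continuous_on UNIV (\<lambda>t. (xm (ys + t *\<^sub>R d), ys + t *\<^sub>R d))"
    by (intro continuous_intros continuous_on_compose2[OF xmin_continuous[of UNIV]]) auto
  then have "continuous_on UNIV (\<lambda>t. (\<lambda>(x, y). gy x y) (xm (ys + t *\<^sub>R d), ys + t *\<^sub>R d))"
    by (rule continuous_on_compose2[OF cont_gy]) auto
  then have "continuous_on UNIV g"
    unfolding g_def by (auto intro: continuous_intros)
  then have "(g \<longlongrightarrow> g 0) (at_right 0)"
    by (auto simp: continuous_on_def intro: tendsto_mono[OF at_le])
  moreover have "\<forall>\<^sub>F t in at_right 0. g t \<le> 0"
    using eventually_at_right_real[OF zero_less_one] by eventually_elim (use g_nonpos in auto)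
  ultimately have "g 0 \<le> 0"
    by (simp add: tendsto_upperbound)
  then show ?thesis
    by (simp add: g_def d_def)
qed

lemma Yset_saddle: "ys \<in> Yset f p X Y z \<Longrightarrow> y \<in> Y \<Longrightarrow> f (xm ys) y \<le> f (xm ys) ys"
  using f_le_tangent_snd[of "xm ys" y ys] Yset_first_order by force

lemma K_bdd_above: "bdd_above ((\<lambda>y. K x y) ` Y)"
proof -
  have "continuous_on Y (f x)"
    using f_has_derivative_snd by (intro has_derivative_continuous_on) (auto intro: has_derivative_at_withinI)
  then have "continuous_on Y (\<lambda>y. K x y)"
    unfolding Kfun_def by (intro continuous_intros)
  then show ?thesis
    by (intro bounded_imp_bdd_above compact_imp_bounded compact_continuous_image Y(2))
qed

lemma xstar_eq_xmin:
  assumes ys: "ys \<in> Yset f p X Y z"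
  shows "xstar f p X Y z = xm ys"
proof -
  define \<phi> where "\<phi> x = (SUP y\<in>Y. K x y)" for x
  define xs where "xs = xstar f p X Y z"
  have ysY: "ys \<in> Y"
    using ys by (simp add: Yset_def)
  have K_le_\<phi>: "K x ys \<le> \<phi> x" for x
    unfolding \<phi>_def using ysY K_bdd_above by (rule cSUP_upper)
  have \<phi>_xmin: "\<phi> (xm ys) = K (xm ys) ys"
    unfolding \<phi>_def using ysY Yset_saddle[OF ys] by (intro cSup_eq_maximum) (auto simp: Kfun_def)
  have "\<exists>x. x \<in> X \<and> (\<forall>x'\<in>X. \<phi> x \<le> \<phi> x')"
    using xmin_in \<phi>_xmin xmin_le K_le_\<phi> by (metis order_trans)
  from someI_ex[OF this] have "xs \<in> X" "\<phi> xs \<le> \<phi> (xm ys)"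
    using xmin_in unfolding xs_def xstar_def \<phi>_def by blast+
  with K_quadratic_growth[of xs ys] K_le_\<phi>[of xs] \<phi>_xmin
  have "(p - L) / 2 * (norm (xs - xm ys))\<^sup>2 \<le> 0"
    by linarith
  with pL show ?thesis
    by (simp add: xs_def mult_le_0_iff)
qed

lemma xmin_gap_le_inner_gy:
  assumes "ys \<in> Yset f p X Y z" "y \<in> Y"
  shows "(p - L) * (norm (xm ys - xm y))\<^sup>2 \<le> gy (xm y) y \<bullet> (ys - y)"
proof -
  have "K (xm ys) ys + (p - L) / 2 * (norm (xm y - xm ys))\<^sup>2 \<le> K (xm y) ys"
    by (rule K_quadratic_growth[OF xmin_in])
  moreover have "K (xm y) y + (p - L) / 2 * (norm (xm ys - xm y))\<^sup>2 \<le> K (xm ys) y"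
    by (rule K_quadratic_growth[OF xmin_in])
  moreover have "f (xm ys) y \<le> f (xm ys) ys"
    by (rule Yset_saddle[OF assms])
  moreover have "f (xm y) ys \<le> f (xm y) y + gy (xm y) y \<bullet> (ys - y)"
    by (rule f_le_tangent_snd)
  ultimately show ?thesis
    unfolding Kfun_def norm_minus_commute[of "xm y" "xm ys"] by (simp add: field_simps)
qed

lemma yplus_inner_gy_le:
  fixes \<alpha> :: real and y :: 'b
  assumes "0 < \<alpha>" "w \<in> Y"
  defines "yp \<equiv> yplus f gy p \<alpha> X Y y z"
  shows "\<alpha> * (gy (xm yp) yp \<bullet> (w - yp))
    \<le> (1 + \<alpha> * L * p / (p - L)) * norm (y - yp) * norm (w - yp)"
proof -
  have "closed Y"
    using Y(2) compact_imp_closed by blast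
  have "(y + \<alpha> *\<^sub>R gy (xm y) y - yp) \<bullet> (w - yp) \<le> 0"
    unfolding yp_def yplus_def using Y(3) \<open>closed Y\<close> assms(2) by (rule closest_point_dot)
  then have "\<alpha> * (gy (xm y) y \<bullet> (w - yp)) \<le> (yp - y) \<bullet> (w - yp)"
    by (simp add: inner_diff_left inner_add_left)
  also have "\<dots> \<le> norm (y - yp) * norm (w - yp)"
    using Cauchy_Schwarz_ineq2 norm_minus_commute abs_le_iff by metis
  finally have projection: "\<alpha> * (gy (xm y) y \<bullet> (w - yp)) \<le> norm (y - yp) * norm (w - yp)" .
  have "(gy (xm yp) yp - gy (xm y) y) \<bullet> (w - yp) \<le> norm (gy (xm yp) yp - gy (xm y) y) * norm (w - yp)"
    using Cauchy_Schwarz_ineq2 abs_le_iff by metis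
  also have "\<dots> \<le> L * p / (p - L) * norm (y - yp) * norm (w - yp)"
    using gy_xmin_Lipschitz[of yp y] by (intro mult_right_mono) (simp_all add: norm_minus_commute)
  finally have "\<alpha> * ((gy (xm yp) yp - gy (xm y) y) \<bullet> (w - yp))
      \<le> \<alpha> * (L * p / (p - L) * norm (y - yp) * norm (w - yp))"
    using assms(1) by (intro mult_left_mono) auto
  with projection show ?thesis
    by (simp add: inner_diff_left algebra_simps)
qed

lemma yplus_in: "yplus f gy p \<alpha> X Y y z \<in> Y"
  unfolding yplus_def using Y(1,2) by (intro closest_point_in_set compact_imp_closed)

lemma xstar_xmin_yplus_le_infdist:
  fixes \<alpha> :: real and y :: 'b
  assumes "0 < \<alpha>"
  defines "yp \<equiv> yplus f gy p \<alpha> X Y y z"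
  shows "\<alpha> * (p - L) * (norm (xstar f p X Y z - xm yp))\<^sup>2
    \<le> (1 + \<alpha> * L * p / (p - L)) * norm (y - yp) * infdist yp (Yset f p X Y z)"
proof (rule le_mult_infdist[OF Yset_nonempty])
  show "0 \<le> (1 + \<alpha> * L * p / (p - L)) * norm (y - yp)"
    using assms(1) pL L_nonneg by simp
  fix ys assume ys: "ys \<in> Yset f p X Y z"
  then have "ys \<in> Y"
    by (simp add: Yset_def)
  have "\<alpha> * (p - L) * (norm (xm ys - xm yp))\<^sup>2 \<le> \<alpha> * (gy (xm yp) yp \<bullet> (ys - yp))"
    using xmin_gap_le_inner_gy[OF ys yplus_in] assms(1) unfolding yp_def
    by (simp add: mult.assoc)
  also have "\<dots> \<le> (1 + \<alpha> * L * p / (p - L)) * norm (y - yp) * norm (ys - yp)"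
    unfolding yp_def by (rule yplus_inner_gy_le[OF assms(1) \<open>ys \<in> Y\<close>])
  finally show "\<alpha> * (p - L) * (norm (xstar f p X Y z - xm yp))\<^sup>2
      \<le> (1 + \<alpha> * L * p / (p - L)) * norm (y - yp) * dist yp ys"
    by (simp add: xstar_eq_xmin[OF ys] dist_norm norm_minus_commute)
qed

lemma yplus_constant_bounds:
  assumes "0 < \<alpha>"
  shows "0 \<le> 1 + \<alpha> * L * p / (p - L)"
    and "1 + \<alpha> * L * p / (p - L) \<le> 1 + \<alpha> * L + \<alpha> * L * (2 * (p + L) / (p - L))"
proof -
  show "0 \<le> 1 + \<alpha> * L * p / (p - L)"
    using assms L_nonneg pL by simp
  have "L / (p - L) \<le> 2 * (p + L) / (p - L)"
    using pL L_nonneg by (intro divide_right_mono) auto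
  then have "\<alpha> * L * (L / (p - L)) \<le> \<alpha> * L * (2 * (p + L) / (p - L))"
    using assms L_nonneg by (intro mult_left_mono) auto
  moreover have "\<alpha> * L * p / (p - L) = \<alpha> * L + \<alpha> * L * (L / (p - L))"
    using pL by (simp add: field_simps)
  ultimately show "1 + \<alpha> * L * p / (p - L) \<le> 1 + \<alpha> * L + \<alpha> * L * (2 * (p + L) / (p - L))"
    by linarith
qed

lemma infdist_Yset_le_diameter: "y \<in> Y \<Longrightarrow> infdist y (Yset f p X Y z) \<le> diameter Y"
proof -
  assume "y \<in> Y"
  obtain ys where ys: "ys \<in> Yset f p X Y z"
    using Yset_nonempty by blast
  then have "infdist y (Yset f p X Y z) \<le> dist y ys"
    by (rule infdist_le)
  also have "\<dots> \<le> diameter Y"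
    using \<open>y \<in> Y\<close> ys compact_imp_bounded[OF Y(2)] by (intro diameter_bounded_bound) (auto simp: Yset_def)
  finally show ?thesis .
qed

end

theorem lemma11:
  fixes f :: "'a::euclidean_space \<Rightarrow> 'b::euclidean_space \<Rightarrow> real"
    and gx :: "'a \<Rightarrow> 'b \<Rightarrow> 'a" and gy :: "'a \<Rightarrow> 'b \<Rightarrow> 'b"
    and X :: "'a set" and Y :: "'b set"
    and L p \<alpha> :: real and y :: 'b and z :: 'a
  assumes X: "X \<noteq> {}" "closed X" "convex X"
    and Y: "Y \<noteq> {}" "closed Y" "convex Y" "compact Y"
    and grad: "\<And>x y. ((\<lambda>(u, v). f u v) has_derivative
                 (\<lambda>(du, dv). gx x y \<bullet> du + gy x y \<bullet> dv)) (at (x, y))"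
    and cont_gx: "continuous_on UNIV (\<lambda>(x, y). gx x y)"
    and cont_gy: "continuous_on UNIV (\<lambda>(x, y). gy x y)"
    and concave: "\<And>x. concave_on UNIV (f x)"
    and Lip_x: "\<And>x y x' y'. norm (gx x y - gx x' y') \<le> L * norm ((x, y) - (x', y'))"
    and Lip_y: "\<And>x y x' y'. norm (gy x y - gy x' y') \<le> L * norm ((x, y) - (x', y'))"
    and bdd: "\<exists>B. \<forall>x\<in>X. B \<le> (SUP y\<in>Y. f x y)"
    and pL: "p > L" and alpha: "\<alpha> > 0"
    and yY: "y \<in> Y"
  shows "let \<sigma>\<^sub>2 = 2 * (p + L) / (p - L);
             yp = yplus f gy p \<alpha> X Y y z;
             C = 1 + \<alpha> * L + \<alpha> * L * \<sigma>\<^sub>2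
         in \<alpha> * (p - L) * (norm (xstar f p X Y z - xmin f p X yp z))\<^sup>2
              \<le> C * norm (y - yp) * infdist yp (Yset f p X Y z)
          \<and> C * norm (y - yp) * infdist yp (Yset f p X Y z)
              \<le> C * norm (y - yp) * diameter Y"
proof -
  interpret proximal_minimax f gx gy X Y L p z
    using X Y grad cont_gy concave Lip_x Lip_y pL by unfold_locales auto
  define yp where "yp = yplus f gy p \<alpha> X Y y z"
  define C where "C = 1 + \<alpha> * L + \<alpha> * L * (2 * (p + L) / (p - L))"
  note C_bounds = yplus_constant_bounds[OF alpha, folded C_def]
  have "\<alpha> * (p - L) * (norm (xstar f p X Y z - xmin f p X yp z))\<^sup>2
      \<le> (1 + \<alpha> * L * p / (p - L)) * norm (y - yp) * infdist yp (Yset f p X Y z)"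
    unfolding yp_def by (rule xstar_xmin_yplus_le_infdist[OF alpha])
  also have "\<dots> \<le> C * norm (y - yp) * infdist yp (Yset f p X Y z)"
    using C_bounds by (intro mult_right_mono) (auto simp: infdist_nonneg)
  finally have "\<alpha> * (p - L) * (norm (xstar f p X Y z - xmin f p X yp z))\<^sup>2
      \<le> C * norm (y - yp) * infdist yp (Yset f p X Y z)" .
  moreover have "C * norm (y - yp) * infdist yp (Yset f p X Y z) \<le> C * norm (y - yp) * diameter Y"
    using C_bounds infdist_Yset_le_diameter[OF yplus_in]
    unfolding yp_def by (intro mult_left_mono) auto
  ultimately show ?thesis
    unfolding Let_def C_def yp_def by blast
qed

end
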